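(* Let a natural gas network be given by a connected directed graph with node set $\{1,\dots,N\}$ and edge set $\{1,\dots,E\}$ (no self-loops, no parallel edges), with node-edge incidence matrix $A\in\mathbb{R}^{N\times E}$, and let $B\in\mathbb{R}^{N\times E}$, $\gamma_{1}\in\mathbb{R}^{E}$, $\gamma_{2}\in\mathbb{R}^{E\times N}$, $\gamma_{3}\in\mathbb{R}^{E\times E}$, $\delta\in\mathbb{R}^{N}$ be given. Fix a reference node $\mathrm{r}$ and a value $\mathring{\pi}_{\mathrm{r}}\in\mathbb{R}$. Define $\hat{\gamma}_{2}=A\gamma_{2}$, $\hat{\gamma}_{3}=B+A\gamma_{3}$, assume that the matrix $\hat{\gamma}_{2\backslash\mathrm{r}}$ obtained from $\hat{\gamma}_{2}$ by deleting its $\mathrm{r}$-th row and column is invertible, let $\breve{\gamma}_{2}\in\mathbb{R}^{N\times N}$ have zero $\mathrm{r}$-th row and column and remaining entries equal to those of $\hat{\gamma}_{2\backslash\mathrm{r}}^{-1}$, and set $\grave{\gamma}_{2}=\gamma_{2}\breve{\gamma}_{2}$, $\grave{\gamma}_{3}=\gamma_{2}\breve{\gamma}_{2}\hat{\gamma}_{3}-\gamma_{3}$. For $\vartheta\in\mathbb{R}^{N}$, $\kappa\in\mathbb{R}^{E}$, $\varphi\in\mathbb{R}^{E}$, $\pi\in\mathbb{R}^{N}$, $\alpha\in\mathbb{R}^{N\times N}$, $\beta\in\mathbb{R}^{E\times N}$, define the network response model, for $\xi\in\mathbb{R}^{N}$, $$\tilde{\vartheta}(\xi)=\vartheta+\alpha\xi,\quad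 \tilde{\kappa}(\xi)=\kappa+\beta\xi,\quad \tilde{\pi}(\xi)=\pi+\breve{\gamma}_{2}(\alpha-\hat{\gamma}_{3}\beta-I_{N})\xi,\quad \tilde{\varphi}(\xi)=\varphi+\big(\grave{\gamma}_{2}(\alpha-I_{N})-\grave{\gamma}_{3}\beta\big)\xi,$$ and $\tilde{\delta}(\xi)=\delta+\xi$. Suppose that $$A\varphi=\vartheta-B\kappa-\delta,\qquad (\alpha-B\beta)^{\top}\mathbb{1}=\mathbb{1},\qquad \varphi=\gamma_{1}+\gamma_{2}\pi+\gamma_{3}\kappa,\qquad \pi_{\mathrm{r}}=\mathring{\pi}_{\mathrm{r}},\ [\alpha]_{\mathrm{r}}=\mathbb{0}^{\top},\ [\beta]_{\mathrm{r}}=\mathbb{0}^{\top}.$$ Then the model is admissible, i.e., for every $\xi\in\mathbb{R}^{N}$, $$A\tilde{\varphi}(\xi)=\tilde{\vartheta}(\xi)-B\tilde{\kappa}(\xi)-\tilde{\delta}(\xi),\qquad \tilde{\varphi}(\xi)=\gamma_{1}+\gamma_{2}\tilde{\pi}(\xi)+\gamma_{3}\tilde{\kappa}(\xi),\qquad \tilde{\pi}_{\mathrm{r}}(\xi)=\mathring{\pi}_{\mathrm{r}}.$$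
   Context: The node-edge incidence matrix is defined by: for each edge $\ell=(n,n')$ directed from sending node $n$ to receiving node $n'$, $A_{n\ell}=+1$, $A_{n'\ell}=-1$, and $A_{k\ell}=0$ otherwise. $\mathbb{1}$ and $\mathbb{0}$ denote all-ones and all-zeros vectors of appropriate dimension, $I_N$ the identity matrix, and $[M]_{\mathrm{r}}$ the $\mathrm{r}$-th row of a matrix $M$. $\vartheta$ are gas injections, $\kappa$ pressure regulation rates, $\varphi$ flow rates, $\pi$ squared pressures, $\alpha,\beta$ recourse (policy) matrices, $\delta$ mean extractions and $\xi$ the extraction forecast error. The equation $\varphi=\gamma_{1}+\gamma_{2}\pi+\gamma_{3}\kappa$ is a linearized Weymouth equation with given coefficients $\gamma_1,\gamma_2,\gamma_3$. *)

theory Defs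
  imports "Jordan_Normal_Form.Matrix" "Jordan_Normal_Form.Determinant"
begin

text \<open>A directed graph with nodes 0..N-1 and edges 0..E-1 (0-based shift of 1..N, 1..E);
  edge l goes from node src l to node dst l.\<close>

definition gas_graph :: "nat \<Rightarrow> nat \<Rightarrow> (nat \<Rightarrow> nat) \<Rightarrow> (nat \<Rightarrow> nat) \<Rightarrow> bool" where
  "gas_graph N E src dst \<longleftrightarrow>
     (\<forall>l<E. src l < N \<and> dst l < N \<and> src l \<noteq> dst l) \<and>
     inj_on (\<lambda>l. (src l, dst l)) {..<E} \<and>
     (\<forall>i<N. \<forall>j<N. (\<lambda>u v. \<exists>l<E. (src l = u \<and> dst l = v) \<or> (src l = v \<and> dst l = u))\<^sup>*\<^sup>* i j)"

definition incidence_mat :: "nat \<Rightarrow> nat \<Rightarrow> (nat \<Rightarrow> nat) \<Rightarrow> (nat \<Rightarrow> nat) \<Rightarrow> real mat" where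
  "incidence_mat N E src dst =
     mat N E (\<lambda>(n, l). if n = src l then 1 else if n = dst l then -1 else 0)"

definition inv_mat :: "real mat \<Rightarrow> real mat" where
  "inv_mat M = (SOME B. inverts_mat M B \<and> inverts_mat B M)"

definition breve_mat :: "nat \<Rightarrow> real mat \<Rightarrow> real mat" where
  "breve_mat r M =
     (let Mi = inv_mat (mat_delete M r r) in
      mat (dim_row M) (dim_col M) (\<lambda>(i, j).
        if i = r \<or> j = r then 0
        else Mi $$ (if i < r then i else i - 1, if j < r then j else j - 1)))"

end

theory Submission
  imports Defs
begin

(* Write v = (alpha - gamma3h beta - I) xi for the nodal mismatch left by the recourse and
  w = gamma2b v for the pressure response. The matrices gamma2g and gamma3g are built so that the
  flow response is exactly gamma2 w + gamma3 beta xi, which keeps the linearised Weymouth equation,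
  and pi_r is unchanged because the r-th row of gamma2b vanishes. Flow conservation reduces to
  gamma2h w = v. Every column of A, hence of gamma2h = A gamma2, sums to zero, and the balance
  condition on alpha - B beta makes the entries of v sum to zero. For such a matrix and right-hand
  side the r-th equation of gamma2h x = v is implied by the others, and the remaining ones are
  solved by the inverse of the reduced matrix, which is what gamma2b applies. *)

abbreviation ones_vec :: "nat \<Rightarrow> 'a :: one vec" where
  "ones_vec n \<equiv> vec n (\<lambda>_. 1)"

definition vec_delete :: "'a vec \<Rightarrow> nat \<Rightarrow> 'a vec" where
  "vec_delete x r = vec (dim_vec x - 1) (\<lambda>k. x $ insert_index r k)"

definition vec_insert_zero :: "nat \<Rightarrow> 'a :: zero vec \<Rightarrow> 'a vec" where
  "vec_insert_zero r u = vec (Suc (dim_vec u)) (\<lambda>i. if i = r then 0 else u $ delete_index r i)"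

lemma sum_lessThan_insert_index:
  fixes f :: "nat \<Rightarrow> 'a :: comm_monoid_add"
  assumes "r < n"
  shows "(\<Sum>i<n. f i) = f r + (\<Sum>k<n - 1. f (insert_index r k))"
proof -
  have "insert_index r ` {..<n - 1} = {..<n} - {r}"
    using insert_index_image[of r "n - 1"] assms by (simp add: lessThan_atLeast0)
  then have "(\<Sum>k<n - 1. f (insert_index r k)) = (\<Sum>i\<in>{..<n} - {r}. f i)"
    by (metis insert_index_inj_on sum.reindex_cong)
  then show ?thesis
    using assms by (simp add: sum.remove)
qed

lemma ones_vec_scalar_prod:
  "(x :: 'a :: semiring_1 vec) \<in> carrier_vec n \<Longrightarrow> ones_vec n \<bullet> x = (\<Sum>i<n. x $ i)"
  by (simp add: scalar_prod_def lessThan_atLeast0)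

lemma transpose_mult_ones_eq_zero:
  fixes X :: "'a :: comm_ring_1 mat"
  assumes "X \<in> carrier_mat n m" "Y \<in> carrier_mat m k"
    and "transpose_mat X *\<^sub>v ones_vec n = 0\<^sub>v m"
  shows "transpose_mat (X * Y) *\<^sub>v ones_vec n = 0\<^sub>v k"
  using assms by (auto simp: transpose_mult)

lemma transpose_incidence_mat_mult_ones:
  assumes "\<forall>l<E. src l < N \<and> dst l < N \<and> src l \<noteq> dst l"
  shows "transpose_mat (incidence_mat N E src dst) *\<^sub>v ones_vec N = 0\<^sub>v E"
proof (rule eq_vecI)
  fix l assume "l < dim_vec (0\<^sub>v E :: real vec)"
  then have l: "l < E" "src l < N" "dst l < N" "src l \<noteq> dst l" using assms by auto
  have "(transpose_mat (incidence_mat N E src dst) *\<^sub>v ones_vec N) $ l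
      = (\<Sum>i<N. (if i = src l then 1 else 0) + (if i = dst l then -1 else 0))"
    using l by (auto simp: incidence_mat_def scalar_prod_def lessThan_atLeast0 intro!: sum.cong)
  also have "\<dots> = 0" using l by (simp add: sum.distrib)
  finally show "(transpose_mat (incidence_mat N E src dst) *\<^sub>v ones_vec N) $ l = 0\<^sub>v E $ l"
    using l by simp
qed (simp add: incidence_mat_def)

lemma dim_vec_delete [simp]: "dim_vec (vec_delete x r) = dim_vec x - 1"
  by (simp add: vec_delete_def)

lemma index_vec_delete [simp]: "k < dim_vec x - 1 \<Longrightarrow> vec_delete x r $ k = x $ insert_index r k"
  by (simp add: vec_delete_def)

lemma dim_vec_insert_zero [simp]: "dim_vec (vec_insert_zero r u) = Suc (dim_vec u)"
  by (simp add: vec_insert_zero_def)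

lemma vec_delete_carrier: "x \<in> carrier_vec n \<Longrightarrow> vec_delete x r \<in> carrier_vec (n - 1)"
  by (intro carrier_vecI) (auto dest: carrier_vecD)

lemma vec_insert_zero_carrier:
  "u \<in> carrier_vec (n - 1) \<Longrightarrow> r < n \<Longrightarrow> vec_insert_zero r u \<in> carrier_vec n"
  by (intro carrier_vecI) (auto dest: carrier_vecD)

lemma index_vec_insert_zero_ref [simp]: "r \<le> dim_vec u \<Longrightarrow> vec_insert_zero r u $ r = 0"
  by (simp add: vec_insert_zero_def)

lemma index_vec_insert_zero_insert_index [simp]:
  assumes "k < dim_vec u"
  shows "vec_insert_zero r u $ insert_index r k = u $ k"
proof -
  have "insert_index r k < Suc (dim_vec u)"
    using assms by (simp add: insert_index_def)
  then show ?thesis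
    using assms by (simp add: vec_insert_zero_def)
qed

lemma index_mat_delete_insert_index [simp]:
  "k < dim_row A - 1 \<Longrightarrow> l < dim_col A - 1 \<Longrightarrow>
   mat_delete A r s $$ (k, l) = A $$ (insert_index r k, insert_index s l)"
  by (simp add: mat_delete_def insert_index_def)

lemma insert_index_less: "r < n \<Longrightarrow> k < n - 1 \<Longrightarrow> insert_index r k < n"
  unfolding insert_index_def by auto

lemma eq_vec_insert_indexI:
  assumes "x \<in> carrier_vec n" "y \<in> carrier_vec n" "r < n" "x $ r = y $ r"
    and "\<And>k. k < n - 1 \<Longrightarrow> x $ insert_index r k = y $ insert_index r k"
  shows "x = y"
proof (rule eq_vecI)
  fix i assume i: "i < dim_vec y"
  show "x $ i = y $ i"
  proof (cases "i = r")
    case False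
    have "delete_index r i < n - 1"
      using i assms(2,3) False by (auto simp: delete_index_def)
    then show ?thesis
      using assms(5) insert_delete_index[OF False] by metis
  qed (use assms(4) in simp)
qed (use assms(1,2) in simp)

lemma eq_vec_by_vec_delete_and_sum:
  fixes x y :: "'a :: comm_ring_1 vec"
  assumes x: "x \<in> carrier_vec n" and y: "y \<in> carrier_vec n" and r: "r < n"
    and del: "vec_delete x r = vec_delete y r" and sum: "ones_vec n \<bullet> x = ones_vec n \<bullet> y"
  shows "x = y"
proof -
  have off_ref: "x $ insert_index r k = y $ insert_index r k" if "k < n - 1" for k
    using arg_cong[OF del, of "\<lambda>z. z $ k"] that x y by simp
  have "x $ r + (\<Sum>k<n - 1. x $ insert_index r k) = y $ r + (\<Sum>k<n - 1. y $ insert_index r k)"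
    using sum x y sum_lessThan_insert_index[OF r, of "($) x"] sum_lessThan_insert_index[OF r, of "($) y"]
    by (simp add: ones_vec_scalar_prod)
  then have at_ref: "x $ r = y $ r"
    using off_ref by simp
  show ?thesis
    using x y r at_ref off_ref by (rule eq_vec_insert_indexI)
qed

lemma vec_delete_mult_vec_insert_zero:
  assumes G: "G \<in> carrier_mat n n" and r: "r < n" and u: "u \<in> carrier_vec (n - 1)"
  shows "vec_delete (G *\<^sub>v vec_insert_zero r u) r = mat_delete G r r *\<^sub>v u"
proof (rule eq_vecI)
  fix k assume "k < dim_vec (mat_delete G r r *\<^sub>v u)"
  then have k: "k < n - 1" using G by simp
  have "vec_delete (G *\<^sub>v vec_insert_zero r u) r $ k
      = (\<Sum>j<n. G $$ (insert_index r k, j) * vec_insert_zero r u $ j)"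
    using G r u k by (simp add: insert_index_less scalar_prod_def lessThan_atLeast0)
  also have "\<dots> = (\<Sum>l<n - 1. mat_delete G r r $$ (k, l) * u $ l)"
    using G r u k by (simp add: sum_lessThan_insert_index[OF r])
  also have "\<dots> = (mat_delete G r r *\<^sub>v u) $ k"
    using G u k by (simp add: scalar_prod_def lessThan_atLeast0)
  finally show "vec_delete (G *\<^sub>v vec_insert_zero r u) r $ k = (mat_delete G r r *\<^sub>v u) $ k" .
qed (use G r in \<open>simp add: vec_delete_def\<close>)

lemma inverts_inv_mat:
  assumes "invertible_mat M"
  shows "inverts_mat M (inv_mat M)" "inverts_mat (inv_mat M) M"
  using someI_ex[of "\<lambda>B. inverts_mat M B \<and> inverts_mat B M"] assms
  by (auto simp: invertible_mat_def inv_mat_def)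

lemma inv_mat_carrier:
  assumes "M \<in> carrier_mat n n" "invertible_mat M"
  shows "inv_mat M \<in> carrier_mat n n"
  using inverts_inv_mat[OF assms(2)] assms(1) unfolding inverts_mat_def
  by (metis carrier_matD carrier_matI index_mult_mat(2,3) index_one_mat(2,3))

lemma mult_inv_mat:
  assumes "M \<in> carrier_mat n n" "invertible_mat M"
  shows "M * inv_mat M = 1\<^sub>m n"
  using inverts_inv_mat(1)[OF assms(2)] assms(1) by (simp add: inverts_mat_def)

lemma index_breve_mat_insert_index [simp]:
  assumes "G \<in> carrier_mat n n" "r < n" "k < n - 1" "l < n - 1"
  shows "breve_mat r G $$ (insert_index r k, insert_index r l) = inv_mat (mat_delete G r r) $$ (k, l)"
  using assms insert_index_less[of r n] by (simp add: breve_mat_def) (simp add: insert_index_def)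

lemma index_breve_mat_ref [simp]:
  assumes "G \<in> carrier_mat n n" "r < n" "i < n" "j < n"
  shows "breve_mat r G $$ (r, j) = 0" "breve_mat r G $$ (i, r) = 0"
  using assms by (auto simp: breve_mat_def)

lemma breve_mat_carrier [simp]: "G \<in> carrier_mat n n \<Longrightarrow> breve_mat r G \<in> carrier_mat n n"
  by (simp add: breve_mat_def)

lemma breve_mat_mult_vec_ref:
  assumes G: "G \<in> carrier_mat n n" and r: "r < n" and v: "v \<in> carrier_vec n"
  shows "(breve_mat r G *\<^sub>v v) $ r = 0"
proof -
  have "(breve_mat r G *\<^sub>v v) $ r = (\<Sum>j<n. breve_mat r G $$ (r, j) * v $ j)"
    using breve_mat_carrier[OF G, of r] v r by (simp add: scalar_prod_def lessThan_atLeast0)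
  also have "\<dots> = 0"
    using G r by simp
  finally show ?thesis .
qed

lemma breve_mat_mult_vec:
  assumes G: "G \<in> carrier_mat n n" and r: "r < n" and inv: "invertible_mat (mat_delete G r r)"
    and v: "v \<in> carrier_vec n"
  shows "breve_mat r G *\<^sub>v v = vec_insert_zero r (inv_mat (mat_delete G r r) *\<^sub>v vec_delete v r)"
    (is "?P *\<^sub>v v = vec_insert_zero r (?Mi *\<^sub>v ?w)")
proof (rule eq_vec_insert_indexI)
  have P: "?P \<in> carrier_mat n n"
    using G by simp
  have Mi: "?Mi \<in> carrier_mat (n - 1) (n - 1)"
    using inv_mat_carrier[OF mat_delete_carrier[OF G] inv] .
  show "vec_insert_zero r (?Mi *\<^sub>v ?w) \<in> carrier_vec n"
    using mult_mat_vec_carrier[OF Mi vec_delete_carrier[OF v]] r by (rule vec_insert_zero_carrier)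
  show "?P *\<^sub>v v \<in> carrier_vec n"
    using P v by (rule mult_mat_vec_carrier)
  show "(?P *\<^sub>v v) $ r = vec_insert_zero r (?Mi *\<^sub>v ?w) $ r"
    using breve_mat_mult_vec_ref[OF G r v] Mi r by simp
  fix k assume k: "k < n - 1"
  have "(?P *\<^sub>v v) $ insert_index r k = (\<Sum>j<n. ?P $$ (insert_index r k, j) * v $ j)"
    using P v r k by (simp add: insert_index_less scalar_prod_def lessThan_atLeast0)
  also have "\<dots> = (\<Sum>l<n - 1. ?Mi $$ (k, l) * ?w $ l)"
    using G v r k by (simp add: sum_lessThan_insert_index[OF r] insert_index_less)
  also have "\<dots> = vec_insert_zero r (?Mi *\<^sub>v ?w) $ insert_index r k"
    using Mi v k by (simp add: scalar_prod_def lessThan_atLeast0)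
  finally show "(?P *\<^sub>v v) $ insert_index r k = vec_insert_zero r (?Mi *\<^sub>v ?w) $ insert_index r k" .
qed (rule r)

lemma mult_breve_mat_mult_vec:
  fixes G :: "real mat"
  assumes G: "G \<in> carrier_mat n n" and r: "r < n"
    and inv: "invertible_mat (mat_delete G r r)"
    and col_sums: "transpose_mat G *\<^sub>v ones_vec n = 0\<^sub>v n"
    and v: "v \<in> carrier_vec n" and sum: "ones_vec n \<bullet> v = 0"
  shows "G *\<^sub>v (breve_mat r G *\<^sub>v v) = v"
proof -
  define D where "D = mat_delete G r r"
  define z where "z = vec_insert_zero r (inv_mat D *\<^sub>v vec_delete v r)"
  have D: "D \<in> carrier_mat (n - 1) (n - 1)"
    unfolding D_def using G by (rule mat_delete_carrier)
  have Mi: "inv_mat D \<in> carrier_mat (n - 1) (n - 1)"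
    using inv_mat_carrier[OF D] inv by (simp add: D_def)
  have u: "inv_mat D *\<^sub>v vec_delete v r \<in> carrier_vec (n - 1)"
    using Mi vec_delete_carrier[OF v] by (rule mult_mat_vec_carrier)
  have z: "z \<in> carrier_vec n"
    unfolding z_def using u r by (rule vec_insert_zero_carrier)
  have "vec_delete (G *\<^sub>v z) r = D *\<^sub>v (inv_mat D *\<^sub>v vec_delete v r)"
    unfolding z_def D_def using G r u[unfolded D_def] by (rule vec_delete_mult_vec_insert_zero)
  also have "\<dots> = (D * inv_mat D) *\<^sub>v vec_delete v r"
    using D Mi vec_delete_carrier[OF v] by (rule assoc_mult_mat_vec[symmetric])
  also have "\<dots> = vec_delete v r"
    using mult_inv_mat[OF D] inv vec_delete_carrier[OF v] by (simp add: D_def)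
  finally have del: "vec_delete (G *\<^sub>v z) r = vec_delete v r" .
  have "ones_vec n \<bullet> (G *\<^sub>v z) = (transpose_mat G *\<^sub>v ones_vec n) \<bullet> z"
    using transpose_vec_mult_scalar[OF G z, of "ones_vec n"] by simp
  then have "ones_vec n \<bullet> (G *\<^sub>v z) = ones_vec n \<bullet> v"
    using col_sums z sum by simp
  then have "G *\<^sub>v z = v"
    using eq_vec_by_vec_delete_and_sum[OF mult_mat_vec_carrier[OF G z] v r del] by blast
  then show ?thesis
    using breve_mat_mult_vec[OF G r inv v] by (simp add: z_def D_def)
qed

lemma response_flow_mult_vec:
  fixes G2 P H G3 Al Be :: "'a :: comm_ring_1 mat"
  assumes G2: "G2 \<in> carrier_mat m n" and P: "P \<in> carrier_mat n n" and H: "H \<in> carrier_mat n m"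
    and G3: "G3 \<in> carrier_mat m m" and Al: "Al \<in> carrier_mat n n" and Be: "Be \<in> carrier_mat m n"
    and x: "x \<in> carrier_vec n"
  shows "(G2 * P * (Al - 1\<^sub>m n) - (G2 * P * H - G3) * Be) *\<^sub>v x
       = G2 *\<^sub>v (P *\<^sub>v ((Al - H * Be - 1\<^sub>m n) *\<^sub>v x)) + G3 *\<^sub>v (Be *\<^sub>v x)"
proof -
  define a b c where "a = Al *\<^sub>v x" and "b = Be *\<^sub>v x" and "c = H *\<^sub>v b"
  have a: "a \<in> carrier_vec n" and b: "b \<in> carrier_vec m" and c: "c \<in> carrier_vec n"
    using Al Be H x by (auto simp: a_def b_def c_def)
  have GP: "G2 * P \<in> carrier_mat m n"
    using G2 P by simp
  have "(Al - 1\<^sub>m n) *\<^sub>v x = a - x"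
    using Al x by (simp add: a_def minus_mult_distrib_mat_vec)
  then have "(G2 * P * (Al - 1\<^sub>m n)) *\<^sub>v x = (G2 * P) *\<^sub>v a - (G2 * P) *\<^sub>v x"
    using assoc_mult_mat_vec[OF GP _ x, of "Al - 1\<^sub>m n"] GP Al a x
    by (simp add: minus_carrier_mat mult_minus_distrib_mat_vec)
  moreover have "((G2 * P * H - G3) * Be) *\<^sub>v x = (G2 * P) *\<^sub>v c - G3 *\<^sub>v b"
  proof -
    have "((G2 * P * H - G3) * Be) *\<^sub>v x = (G2 * P * H) *\<^sub>v b - G3 *\<^sub>v b"
      using assoc_mult_mat_vec[of "G2 * P * H - G3" m m Be n x] GP H G3 Be x b
      by (simp add: b_def minus_carrier_mat minus_mult_distrib_mat_vec[of _ m m])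
    also have "(G2 * P * H) *\<^sub>v b = (G2 * P) *\<^sub>v c"
      unfolding c_def using GP H b by (rule assoc_mult_mat_vec)
    finally show ?thesis .
  qed
  ultimately have "(G2 * P * (Al - 1\<^sub>m n) - (G2 * P * H - G3) * Be) *\<^sub>v x
      = (G2 * P) *\<^sub>v a - (G2 * P) *\<^sub>v x - ((G2 * P) *\<^sub>v c - G3 *\<^sub>v b)"
    using minus_mult_distrib_mat_vec[of "G2 * P * (Al - 1\<^sub>m n)" m n "(G2 * P * H - G3) * Be" x]
      mult_carrier_mat[OF minus_carrier_mat[OF G3] Be] GP Al x
    by (simp add: minus_carrier_mat)
  also have "\<dots> = (G2 * P) *\<^sub>v (a - c - x) + G3 *\<^sub>v b"
    using GP G3 a b c x
    by (intro eq_vecI) (auto simp: mult_minus_distrib_mat_vec)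
  also have "(Al - H * Be - 1\<^sub>m n) *\<^sub>v x = a - c - x"
    using minus_mult_distrib_mat_vec[of "Al - H * Be" n n "1\<^sub>m n" x]
      minus_mult_distrib_mat_vec[of Al n n "H * Be" x] Al H Be x
    by (simp add: a_def b_def c_def minus_carrier_mat)
  ultimately show ?thesis
    using G2 P a c x by (simp add: b_def)
qed

lemma response_mult_vec_split:
  fixes A B G3 Al Be :: "'a :: comm_ring_1 mat"
  assumes A: "A \<in> carrier_mat n m" and B: "B \<in> carrier_mat n m" and G3: "G3 \<in> carrier_mat m m"
    and Al: "Al \<in> carrier_mat n n" and Be: "Be \<in> carrier_mat m n" and x: "x \<in> carrier_vec n"
  shows "(Al - (B + A * G3) * Be - 1\<^sub>m n) *\<^sub>v x
       = Al *\<^sub>v x - B *\<^sub>v (Be *\<^sub>v x) - A *\<^sub>v (G3 *\<^sub>v (Be *\<^sub>v x)) - x"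
proof -
  have H: "B + A * G3 \<in> carrier_mat n m"
    using A B G3 by simp
  have "(Al - (B + A * G3) * Be - 1\<^sub>m n) *\<^sub>v x = Al *\<^sub>v x - (B + A * G3) *\<^sub>v (Be *\<^sub>v x) - x"
    using minus_mult_distrib_mat_vec[of "Al - (B + A * G3) * Be" n n "1\<^sub>m n" x]
      minus_mult_distrib_mat_vec[of Al n n "(B + A * G3) * Be" x]
      mult_carrier_mat[OF H Be] assoc_mult_mat_vec[OF H Be x] Al x
    by (simp add: minus_carrier_mat)
  also have "(B + A * G3) *\<^sub>v (Be *\<^sub>v x) = B *\<^sub>v (Be *\<^sub>v x) + A *\<^sub>v (G3 *\<^sub>v (Be *\<^sub>v x))"
    using A B G3 Be x by (simp add: add_mult_distrib_mat_vec[of _ n m])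
  finally show ?thesis
    using A B G3 Al Be x by (intro eq_vecI) auto
qed

lemma ones_vec_scalar_prod_response_eq_zero:
  fixes A B G3 Al Be :: "'a :: comm_ring_1 mat"
  assumes A: "A \<in> carrier_mat n m" and B: "B \<in> carrier_mat n m" and G3: "G3 \<in> carrier_mat m m"
    and Al: "Al \<in> carrier_mat n n" and Be: "Be \<in> carrier_mat m n" and x: "x \<in> carrier_vec n"
    and A_cols: "transpose_mat A *\<^sub>v ones_vec n = 0\<^sub>v m"
    and balance: "transpose_mat (Al - B * Be) *\<^sub>v ones_vec n = ones_vec n"
  shows "ones_vec n \<bullet> ((Al - (B + A * G3) * Be - 1\<^sub>m n) *\<^sub>v x) = 0"
proof -
  define y where "y = G3 *\<^sub>v (Be *\<^sub>v x)"
  have y: "y \<in> carrier_vec m"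
    using Be G3 x by (simp add: y_def)
  have ABe: "Al - B * Be \<in> carrier_mat n n"
    using B Be by (intro minus_carrier_mat) simp
  have "(Al - B * Be) *\<^sub>v x = Al *\<^sub>v x - B *\<^sub>v (Be *\<^sub>v x)"
    using minus_mult_distrib_mat_vec[of Al n n "B * Be" x] Al B Be x by simp
  then have split: "(Al - (B + A * G3) * Be - 1\<^sub>m n) *\<^sub>v x = (Al - B * Be) *\<^sub>v x - A *\<^sub>v y - x"
    using response_mult_vec_split[OF A B G3 Al Be x] by (simp add: y_def)
  have "ones_vec n \<bullet> ((Al - B * Be) *\<^sub>v x) = ones_vec n \<bullet> x"
    using transpose_vec_mult_scalar[OF ABe x, of "ones_vec n"] balance by simp
  moreover have "ones_vec n \<bullet> (A *\<^sub>v y) = 0"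
    using transpose_vec_mult_scalar[OF A y, of "ones_vec n"] A_cols y by simp
  ultimately show ?thesis
    unfolding split using ABe A x y
    by (simp add: scalar_prod_minus_distrib[of _ n])
qed

lemma weymouth_shift:
  fixes G2 G3 :: "'a :: comm_ring_1 mat"
  assumes G2: "G2 \<in> carrier_mat m n" and G3: "G3 \<in> carrier_mat m m"
    and c: "c \<in> carrier_vec m" and p: "p \<in> carrier_vec n" and k: "k \<in> carrier_vec m"
    and w: "w \<in> carrier_vec n" and b: "b \<in> carrier_vec m"
    and f: "f = c + G2 *\<^sub>v p + G3 *\<^sub>v k"
  shows "f + G2 *\<^sub>v w + G3 *\<^sub>v b = c + G2 *\<^sub>v (p + w) + G3 *\<^sub>v (k + b)"
  using assms by (intro eq_vecI) (auto simp: mult_add_distrib_mat_vec)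

lemma flow_balance_shift:
  fixes A B G2 G3 Al Be :: "'a :: comm_ring_1 mat"
  assumes A: "A \<in> carrier_mat n m" and B: "B \<in> carrier_mat n m" and G2: "G2 \<in> carrier_mat m n"
    and G3: "G3 \<in> carrier_mat m m" and Al: "Al \<in> carrier_mat n n" and Be: "Be \<in> carrier_mat m n"
    and f: "f \<in> carrier_vec m" and s: "s \<in> carrier_vec n" and k: "k \<in> carrier_vec m"
    and d: "d \<in> carrier_vec n" and w: "w \<in> carrier_vec n" and x: "x \<in> carrier_vec n"
    and flow: "A *\<^sub>v f = s - B *\<^sub>v k - d"
    and response: "A *\<^sub>v (G2 *\<^sub>v w) = (Al - (B + A * G3) * Be - 1\<^sub>m n) *\<^sub>v x"
  shows "A *\<^sub>v (f + G2 *\<^sub>v w + G3 *\<^sub>v (Be *\<^sub>v x))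
       = (s + Al *\<^sub>v x) - B *\<^sub>v (k + Be *\<^sub>v x) - (d + x)"
  using response_mult_vec_split[OF A B G3 Al Be x] flow response A B G2 G3 Al Be f s k d w x
  by (intro eq_vecI) (auto simp: mult_add_distrib_mat_vec)

lemma mult_breve_mat_response:
  fixes A B G2 G3 Al Be :: "real mat"
  assumes A: "A \<in> carrier_mat n m" and B: "B \<in> carrier_mat n m" and G2: "G2 \<in> carrier_mat m n"
    and G3: "G3 \<in> carrier_mat m m" and Al: "Al \<in> carrier_mat n n" and Be: "Be \<in> carrier_mat m n"
    and x: "x \<in> carrier_vec n" and r: "r < n"
    and inv: "invertible_mat (mat_delete (A * G2) r r)"
    and A_cols: "transpose_mat A *\<^sub>v ones_vec n = 0\<^sub>v m"
    and balance: "transpose_mat (Al - B * Be) *\<^sub>v ones_vec n = ones_vec n"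
    and v_def: "v = (Al - (B + A * G3) * Be - 1\<^sub>m n) *\<^sub>v x"
  shows "A *\<^sub>v (G2 *\<^sub>v (breve_mat r (A * G2) *\<^sub>v v)) = v"
proof -
  have AG2: "A * G2 \<in> carrier_mat n n"
    using A G2 by simp
  have v: "v \<in> carrier_vec n"
    unfolding v_def using minus_carrier_mat[OF one_carrier_mat] x by (rule mult_mat_vec_carrier)
  have "(A * G2) *\<^sub>v (breve_mat r (A * G2) *\<^sub>v v) = v"
  proof (rule mult_breve_mat_mult_vec[OF AG2 r inv _ v])
    show "transpose_mat (A * G2) *\<^sub>v ones_vec n = 0\<^sub>v n"
      using A G2 A_cols by (rule transpose_mult_ones_eq_zero)
    show "ones_vec n \<bullet> v = 0"
      unfolding v_def using A B G3 Al Be x A_cols balance by (rule ones_vec_scalar_prod_response_eq_zero)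
  qed
  then show ?thesis
    using assoc_mult_mat_vec[OF A G2 mult_mat_vec_carrier[OF breve_mat_carrier[OF AG2] v]] by simp
qed

theorem lemma2:
  fixes N E r :: nat
    and src dst :: "nat \<Rightarrow> nat"
    and A B \<gamma>3 :: "real mat" and \<gamma>2 :: "real mat"
    and \<gamma>1 \<delta> :: "real vec"
    and \<pi>r :: real
    and \<theta> \<kappa> \<phi> \<pi> :: "real vec"
    and \<alpha> \<beta> :: "real mat"
    and \<gamma>2h \<gamma>3h \<gamma>2b \<gamma>2g \<gamma>3g :: "real mat"
    and \<theta>t \<kappa>t \<pi>t \<phi>t \<delta>t :: "real vec \<Rightarrow> real vec"
  assumes graph: "gas_graph N E src dst"
    and A_def: "A = incidence_mat N E src dst"
    and B: "B \<in> carrier_mat N E"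
    and g1: "\<gamma>1 \<in> carrier_vec E"
    and g2: "\<gamma>2 \<in> carrier_mat E N"
    and g3: "\<gamma>3 \<in> carrier_mat E E"
    and dl: "\<delta> \<in> carrier_vec N"
    and r: "r < N"
    and th: "\<theta> \<in> carrier_vec N"
    and ka: "\<kappa> \<in> carrier_vec E"
    and ph: "\<phi> \<in> carrier_vec E"
    and pi: "\<pi> \<in> carrier_vec N"
    and al: "\<alpha> \<in> carrier_mat N N"
    and be: "\<beta> \<in> carrier_mat E N"
    and g2h_def: "\<gamma>2h = A * \<gamma>2"
    and g3h_def: "\<gamma>3h = B + A * \<gamma>3"
    and inv: "invertible_mat (mat_delete \<gamma>2h r r)"
    and g2b_def: "\<gamma>2b = breve_mat r \<gamma>2h"
    and g2g_def: "\<gamma>2g = \<gamma>2 * \<gamma>2b"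
    and g3g_def: "\<gamma>3g = \<gamma>2 * \<gamma>2b * \<gamma>3h - \<gamma>3"
    and tht_def: "\<And>\<xi>. \<theta>t \<xi> = \<theta> + \<alpha> *\<^sub>v \<xi>"
    and kat_def: "\<And>\<xi>. \<kappa>t \<xi> = \<kappa> + \<beta> *\<^sub>v \<xi>"
    and pit_def: "\<And>\<xi>. \<pi>t \<xi> = \<pi> + \<gamma>2b * (\<alpha> - \<gamma>3h * \<beta> - 1\<^sub>m N) *\<^sub>v \<xi>"
    and pht_def: "\<And>\<xi>. \<phi>t \<xi> = \<phi> + (\<gamma>2g * (\<alpha> - 1\<^sub>m N) - \<gamma>3g * \<beta>) *\<^sub>v \<xi>"
    and dlt_def: "\<And>\<xi>. \<delta>t \<xi> = \<delta> + \<xi>"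
    and flow: "A *\<^sub>v \<phi> = \<theta> - B *\<^sub>v \<kappa> - \<delta>"
    and bal: "transpose_mat (\<alpha> - B * \<beta>) *\<^sub>v vec N (\<lambda>_. 1) = vec N (\<lambda>_. 1)"
    and weym: "\<phi> = \<gamma>1 + \<gamma>2 *\<^sub>v \<pi> + \<gamma>3 *\<^sub>v \<kappa>"
    and piref: "\<pi> $ r = \<pi>r"
    and alr: "row \<alpha> r = 0\<^sub>v N"
    and ber: "r < E \<longrightarrow> row \<beta> r = 0\<^sub>v N"
  shows "\<forall>\<xi> \<in> carrier_vec N.
           A *\<^sub>v \<phi>t \<xi> = \<theta>t \<xi> - B *\<^sub>v \<kappa>t \<xi> - \<delta>t \<xi> \<and>
           \<phi>t \<xi> = \<gamma>1 + \<gamma>2 *\<^sub>v \<pi>t \<xi> + \<gamma>3 *\<^sub>v \<kappa>t \<xi> \<and>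
           \<pi>t \<xi> $ r = \<pi>r"
proof
  fix \<xi> :: "real vec" assume \<xi>: "\<xi> \<in> carrier_vec N"
  have A: "A \<in> carrier_mat N E"
    by (simp add: A_def incidence_mat_def)
  have A_cols: "transpose_mat A *\<^sub>v ones_vec N = 0\<^sub>v E"
    using graph unfolding A_def gas_graph_def by (intro transpose_incidence_mat_mult_ones) blast
  have g2h: "\<gamma>2h \<in> carrier_mat N N" and g3h: "\<gamma>3h \<in> carrier_mat N E"
    and g2b: "\<gamma>2b \<in> carrier_mat N N"
    using A B g2 g3 by (simp_all add: g2h_def g3h_def g2b_def)
  define v where "v = (\<alpha> - \<gamma>3h * \<beta> - 1\<^sub>m N) *\<^sub>v \<xi>"
  define w where "w = \<gamma>2b *\<^sub>v v"
  have M: "\<alpha> - \<gamma>3h * \<beta> - 1\<^sub>m N \<in> carrier_mat N N"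
    by (rule minus_carrier_mat[OF one_carrier_mat])
  have v: "v \<in> carrier_vec N"
    unfolding v_def using M \<xi> by (rule mult_mat_vec_carrier)
  have w: "w \<in> carrier_vec N"
    unfolding w_def using g2b v by (rule mult_mat_vec_carrier)
  have response: "A *\<^sub>v (\<gamma>2 *\<^sub>v w) = (\<alpha> - (B + A * \<gamma>3) * \<beta> - 1\<^sub>m N) *\<^sub>v \<xi>"
    unfolding w_def g2b_def g2h_def v_def g3h_def using inv[unfolded g2h_def]
    by (rule mult_breve_mat_response[OF A B g2 g3 al be \<xi> r _ A_cols bal refl])
  have pit: "\<pi>t \<xi> = \<pi> + w"
    using assoc_mult_mat_vec[OF g2b M \<xi>] by (simp add: pit_def w_def v_def)
  have pht: "\<phi>t \<xi> = \<phi> + \<gamma>2 *\<^sub>v w + \<gamma>3 *\<^sub>v (\<beta> *\<^sub>v \<xi>)"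
    using response_flow_mult_vec[OF g2 g2b g3h g3 al be \<xi>] ph g2 w g3 be \<xi>
    by (simp add: pht_def g2g_def g3g_def w_def v_def assoc_add_vec[of _ E])
  have "w $ r = 0"
    unfolding w_def g2b_def using g2h r v by (rule breve_mat_mult_vec_ref)
  then show "A *\<^sub>v \<phi>t \<xi> = \<theta>t \<xi> - B *\<^sub>v \<kappa>t \<xi> - \<delta>t \<xi> \<and>
           \<phi>t \<xi> = \<gamma>1 + \<gamma>2 *\<^sub>v \<pi>t \<xi> + \<gamma>3 *\<^sub>v \<kappa>t \<xi> \<and>
           \<pi>t \<xi> $ r = \<pi>r"
    using flow_balance_shift[OF A B g2 g3 al be ph th ka dl w \<xi> flow response]
      weymouth_shift[OF g2 g3 g1 pi ka w mult_mat_vec_carrier[OF be \<xi>] weym] pit pht piref pi w r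
    by (simp add: tht_def kat_def dlt_def)
qed

end
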